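(* An action theory $\Theta=S\cup E\cup X$ is modular if and only if the big model of $\Theta$ is a model of $\Theta$.
   Context: Fix a set $\mathrm{Act}$ of atomic actions and a set $\mathrm{Prop}$ of atoms. Boolean formulas are classical propositional formulas over $\mathrm{Prop}$; $\models_{CPL}$ is classical consequence; a valuation is a maximal consistent set of literals, and $\mathrm{val}(S)$ is the set of valuations satisfying every formula of a set $S$ of Boolean formulas. Modal formulas are built from Boolean formulas using the Boolean connectives and a box $[a]$ for each $a\in\mathrm{Act}$; $\langle a\rangle\Phi:=\neg[a]\neg\Phi$. A PDL-model is $M=\langle W,R\rangle$ where $W$ is a set of valuations (worlds) and $R$ assigns to each $a$ a relation $R_a\subseteq W\times W$; $w\models_M p$ iff $p\in w$, $w\models_M[a]\Phi$ iff $w'\models_M\Phi$ for all $(w,w')\in R_a$, Boolean connectives as usual. $M\models\Phi$ iff $\Phi$ holds at every world of $M$; $M\models\Sigma$ iff $M\models\Phi$ for all $\Phi\in\Sigma$; $\Sigma\models_{PDL}\Phi$ iff every PDL-model of $\Sigma$ is a model of $\Phi$. A static law is a Boolean formula; an effect law for $a$ is $\varphi\to[a]\psi$ and an executability law for $a$ is $\varphi\to\langle a\rangle\top$, with $\varphi,\psi$ Boolean. An action theory is $\Theta=S\cup E\cup X$ with $S$ a set of static laws, $E$ a set of effect laws and $X$ a set of executability laws; $E_a$ denotes the effect laws for $a$. $\Theta$ is modular iff for every Boolean $\varphi$, $\Theta\models_{PDL}\varphi$ implies $S\models_{CPL}\varphi$. The big model of $\Theta$ is $M_{big}=\langle W_{big},R_{big}\rangle$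 with $W_{big}=\mathrm{val}(S)$ and, for each $a$, $(R_{big})_a=\{(w,w')\in W_{big}\times W_{big}:$ for all $\varphi\to[a]\psi\in E_a$, if $w\models\varphi$ then $w'\models\psi\}$. *)

theory Defs
  imports Main
begin

datatype 'p bform =
    Atom 'p | BTop | BBot | BNeg "'p bform" | BAnd "'p bform" "'p bform"
  | BOr "'p bform" "'p bform" | BImp "'p bform" "'p bform"

text \<open>A valuation (maximal consistent set of literals) is represented by the set
  of atoms it makes true.\<close>
type_synonym 'p valuation = "'p set"

fun bsat :: "'p valuation \<Rightarrow> 'p bform \<Rightarrow> bool" where
  "bsat w (Atom p) = (p \<in> w)"
| "bsat w BTop = True"
| "bsat w BBot = False"
| "bsat w (BNeg f) = (\<not> bsat w f)"
| "bsat w (BAnd f g) = (bsat w f \<and> bsat w g)"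
| "bsat w (BOr f g) = (bsat w f \<or> bsat w g)"
| "bsat w (BImp f g) = (bsat w f \<longrightarrow> bsat w g)"

definition val :: "'p bform set \<Rightarrow> 'p valuation set" where
  "val S = {w. \<forall>f\<in>S. bsat w f}"

definition cpl_conseq :: "'p bform set \<Rightarrow> 'p bform \<Rightarrow> bool" where
  "cpl_conseq S f \<longleftrightarrow> (\<forall>w\<in>val S. bsat w f)"

datatype ('a, 'p) mform =
    MB "'p bform" | MNeg "('a,'p) mform" | MAnd "('a,'p) mform" "('a,'p) mform"
  | MOr "('a,'p) mform" "('a,'p) mform" | MImp "('a,'p) mform" "('a,'p) mform"
  | Box 'a "('a,'p) mform"

definition Dia :: "'a \<Rightarrow> ('a,'p) mform \<Rightarrow> ('a,'p) mform" where
  "Dia a F = MNeg (Box a (MNeg F))"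

definition pdl_model :: "'p valuation set \<Rightarrow> ('a \<Rightarrow> ('p valuation \<times> 'p valuation) set) \<Rightarrow> bool" where
  "pdl_model W R \<longleftrightarrow> (\<forall>a. R a \<subseteq> W \<times> W)"

fun msat :: "('a \<Rightarrow> ('p valuation \<times> 'p valuation) set) \<Rightarrow> 'p valuation \<Rightarrow> ('a,'p) mform \<Rightarrow> bool" where
  "msat R w (MB f) = bsat w f"
| "msat R w (MNeg F) = (\<not> msat R w F)"
| "msat R w (MAnd F G) = (msat R w F \<and> msat R w G)"
| "msat R w (MOr F G) = (msat R w F \<or> msat R w G)"
| "msat R w (MImp F G) = (msat R w F \<longrightarrow> msat R w G)"
| "msat R w (Box a F) = (\<forall>w'. (w, w') \<in> R a \<longrightarrow> msat R w' F)"

definition model_of :: "'p valuation set \<Rightarrow> ('a \<Rightarrow> ('p valuation \<times> 'p valuation) set) \<Rightarrow> ('a,'p) mform \<Rightarrow> bool" where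
  "model_of W R F \<longleftrightarrow> (\<forall>w\<in>W. msat R w F)"

definition model_of_set :: "'p valuation set \<Rightarrow> ('a \<Rightarrow> ('p valuation \<times> 'p valuation) set) \<Rightarrow> ('a,'p) mform set \<Rightarrow> bool" where
  "model_of_set W R \<Sigma> \<longleftrightarrow> (\<forall>F\<in>\<Sigma>. model_of W R F)"

definition pdl_conseq :: "('a,'p) mform set \<Rightarrow> ('a,'p) mform \<Rightarrow> bool" where
  "pdl_conseq \<Sigma> F \<longleftrightarrow> (\<forall>W R. pdl_model W R \<longrightarrow> model_of_set W R \<Sigma> \<longrightarrow> model_of W R F)"

text \<open>Laws. Static law: Boolean formula. Effect law for a: (a, phi, psi) standing for
  phi \<longrightarrow> [a] psi. Executability law for a: (a, phi) standing for phi \<longrightarrow> <a> True.\<close>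
definition effect_fml :: "'a \<times> 'p bform \<times> 'p bform \<Rightarrow> ('a,'p) mform" where
  "effect_fml e = (case e of (a, \<phi>, \<psi>) \<Rightarrow> MImp (MB \<phi>) (Box a (MB \<psi>)))"

definition exec_fml :: "'a \<times> 'p bform \<Rightarrow> ('a,'p) mform" where
  "exec_fml x = (case x of (a, \<phi>) \<Rightarrow> MImp (MB \<phi>) (Dia a (MB BTop)))"

definition theory_fmls :: "'p bform set \<Rightarrow> ('a \<times> 'p bform \<times> 'p bform) set \<Rightarrow> ('a \<times> 'p bform) set \<Rightarrow> ('a,'p) mform set" where
  "theory_fmls S E X = MB ` S \<union> effect_fml ` E \<union> exec_fml ` X"

definition modular :: "'p bform set \<Rightarrow> ('a \<times> 'p bform \<times> 'p bform) set \<Rightarrow> ('a \<times> 'p bform) set \<Rightarrow> bool" where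
  "modular S E X \<longleftrightarrow> (\<forall>\<phi>. pdl_conseq (theory_fmls S E X) (MB \<phi>) \<longrightarrow> cpl_conseq S \<phi>)"

definition big_W :: "'p bform set \<Rightarrow> 'p valuation set" where
  "big_W S = val S"

definition big_R :: "'p bform set \<Rightarrow> ('a \<times> 'p bform \<times> 'p bform) set \<Rightarrow> 'a \<Rightarrow> ('p valuation \<times> 'p valuation) set" where
  "big_R S E a = {(w, w'). w \<in> val S \<and> w' \<in> val S \<and>
       (\<forall>\<phi> \<psi>. (a, \<phi>, \<psi>) \<in> E \<longrightarrow> bsat w \<phi> \<longrightarrow> bsat w' \<psi>)}"

end

theory Submission
  imports Defs
begin

text \<open>The big model satisfies every static and every effect law by construction, so it is a
  model of the theory exactly when it satisfies the executability laws. If it does, modularity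
  follows because its worlds are all valuations of S. Conversely, suppose modularity and a
  world w of the big model satisfying the precondition \<open>\<chi>\<close> of an executability law for a, but
  without a-successor. Then S together with all effects \<open>\<psi>\<close> triggered at w is unsatisfiable,
  hence by compactness so is S with the effects of finitely many triggers \<open>\<phi>\<^sub>1, \<dots>, \<phi>\<^sub>n\<close>
  true at w. In every model of the theory, a world satisfying \<open>\<chi> \<and> \<phi>\<^sub>1 \<and> \<dots> \<and> \<phi>\<^sub>n\<close> would have
  an a-successor satisfying exactly that set, so the theory entails the Boolean formula
  \<open>\<not>(\<chi> \<and> \<phi>\<^sub>1 \<and> \<dots> \<and> \<phi>\<^sub>n)\<close>; by modularity S does too, contradicting w \<in> val S.\<close>

definition satisfiable :: "'p bform set \<Rightarrow> bool" where
  "satisfiable T \<longleftrightarrow> (\<exists>w. \<forall>f\<in>T. bsat w f)"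

definition finitely_satisfiable :: "'p bform set \<Rightarrow> bool" where
  "finitely_satisfiable T \<longleftrightarrow> (\<forall>F. F \<subseteq> T \<longrightarrow> finite F \<longrightarrow> satisfiable F)"

definition maximal_finitely_satisfiable :: "'p bform set \<Rightarrow> bool" where
  "maximal_finitely_satisfiable M \<longleftrightarrow>
     finitely_satisfiable M \<and> (\<forall>X. finitely_satisfiable X \<longrightarrow> M \<subseteq> X \<longrightarrow> X = M)"

lemma maximal_finitely_satisfiable_closed:
  assumes M: "maximal_finitely_satisfiable M"
    and F: "finite F" "F \<subseteq> M" and entails: "\<And>w. \<forall>f\<in>F. bsat w f \<Longrightarrow> bsat w g"
  shows "g \<in> M"
proof -
  have "finitely_satisfiable (insert g M)"
    unfolding finitely_satisfiable_def
  proof (intro allI impI)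
    fix G assume G: "G \<subseteq> insert g M" "finite G"
    then have "G - {g} \<union> F \<subseteq> M" "finite (G - {g} \<union> F)" using F by auto
    then obtain w where "\<forall>f\<in>G - {g} \<union> F. bsat w f"
      using M unfolding maximal_finitely_satisfiable_def finitely_satisfiable_def satisfiable_def
      by blast
    then show "satisfiable G" using entails unfolding satisfiable_def by blast
  qed
  then show ?thesis using M unfolding maximal_finitely_satisfiable_def by blast
qed

lemma maximal_finitely_satisfiable_complete:
  assumes M: "maximal_finitely_satisfiable M"
  shows "f \<in> M \<or> BNeg f \<in> M"
proof (rule ccontr)
  assume neither: "\<not> (f \<in> M \<or> BNeg f \<in> M)"
  then have "\<not> finitely_satisfiable (insert f M)" "\<not> finitely_satisfiable (insert (BNeg f) M)"
    using M unfolding maximal_finitely_satisfiable_def by blast+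
  then obtain F1 F2 where
    F1: "F1 \<subseteq> insert f M" "finite F1" "\<not> satisfiable F1" and
    F2: "F2 \<subseteq> insert (BNeg f) M" "finite F2" "\<not> satisfiable F2"
    unfolding finitely_satisfiable_def by blast
  have "F1 - {f} \<union> (F2 - {BNeg f}) \<subseteq> M" "finite (F1 - {f} \<union> (F2 - {BNeg f}))"
    using F1 F2 by auto
  then obtain w where w: "\<forall>g\<in>F1 - {f} \<union> (F2 - {BNeg f}). bsat w g"
    using M unfolding maximal_finitely_satisfiable_def finitely_satisfiable_def satisfiable_def
    by blast
  show False
  proof (cases "bsat w f")
    case True
    then have "\<forall>g\<in>F1. bsat w g" using F1(1) w by auto
    then show False using F1(3) unfolding satisfiable_def by blast
  next
    case False
    then have "\<forall>g\<in>F2. bsat w g" using F2(1) w by auto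
    then show False using F2(3) unfolding satisfiable_def by blast
  qed
qed

lemma maximal_finitely_satisfiable_bsat_iff:
  assumes M: "maximal_finitely_satisfiable M"
  shows "bsat {p. Atom p \<in> M} f \<longleftrightarrow> f \<in> M"
proof -
  have closed: "\<And>F g. finite F \<Longrightarrow> F \<subseteq> M \<Longrightarrow> (\<And>w. \<forall>f\<in>F. bsat w f \<Longrightarrow> bsat w g) \<Longrightarrow> g \<in> M"
    using maximal_finitely_satisfiable_closed[OF M] by blast
  have sat: "\<And>F. finite F \<Longrightarrow> F \<subseteq> M \<Longrightarrow> \<exists>w. \<forall>f\<in>F. bsat w f"
    using M unfolding maximal_finitely_satisfiable_def finitely_satisfiable_def satisfiable_def
    by blast
  have complete: "\<And>f. f \<in> M \<or> BNeg f \<in> M"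
    using maximal_finitely_satisfiable_complete[OF M] .
  have consistent: "\<not> (f \<in> M \<and> BNeg f \<in> M)" for f
    using sat[of "{f, BNeg f}"] by auto
  show ?thesis
  proof (induction f)
    case (Atom p) then show ?case by simp
  next
    case BTop then show ?case using closed[of "{}" BTop] by simp
  next
    case BBot then show ?case using sat[of "{BBot}"] by auto
  next
    case (BNeg f) then show ?case using complete[of f] consistent[of f] by auto
  next
    case (BAnd f g)
    have "BAnd f g \<in> M \<Longrightarrow> f \<in> M" using closed[of "{BAnd f g}" f] by auto
    moreover have "BAnd f g \<in> M \<Longrightarrow> g \<in> M" using closed[of "{BAnd f g}" g] by auto
    moreover have "f \<in> M \<Longrightarrow> g \<in> M \<Longrightarrow> BAnd f g \<in> M" using closed[of "{f, g}" "BAnd f g"] by auto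
    ultimately show ?case using BAnd by auto
  next
    case (BOr f g)
    have "f \<in> M \<Longrightarrow> BOr f g \<in> M" using closed[of "{f}" "BOr f g"] by auto
    moreover have "g \<in> M \<Longrightarrow> BOr f g \<in> M" using closed[of "{g}" "BOr f g"] by auto
    moreover have "f \<in> M \<or> g \<in> M" if "BOr f g \<in> M"
    proof (rule ccontr)
      assume "\<not> (f \<in> M \<or> g \<in> M)"
      then have "BNeg f \<in> M" "BNeg g \<in> M" using complete by blast+
      then show False using that sat[of "{BOr f g, BNeg f, BNeg g}"] by auto
    qed
    ultimately show ?case using BOr by auto
  next
    case (BImp f g)
    have "BNeg f \<in> M \<Longrightarrow> BImp f g \<in> M" using closed[of "{BNeg f}" "BImp f g"] by auto
    moreover have "g \<in> M \<Longrightarrow> BImp f g \<in> M" using closed[of "{g}" "BImp f g"] by auto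
    moreover have "BImp f g \<in> M \<Longrightarrow> f \<in> M \<Longrightarrow> g \<in> M" using closed[of "{BImp f g, f}" g] by auto
    ultimately show ?case using BImp complete[of f] consistent[of f] by auto
  qed
qed

theorem compactness:
  assumes "finitely_satisfiable T"
  shows "satisfiable T"
proof -
  let ?A = "{M. T \<subseteq> M \<and> finitely_satisfiable M}"
  have "\<exists>M\<in>?A. \<forall>X\<in>?A. M \<subseteq> X \<longrightarrow> X = M"
  proof (rule subset_Zorn_nonempty)
    show "?A \<noteq> {}" using assms by blast
  next
    fix C assume C: "C \<noteq> {}" "subset.chain ?A C"
    have "finitely_satisfiable (\<Union>C)"
      unfolding finitely_satisfiable_def
    proof (intro allI impI)
      fix F assume F: "F \<subseteq> \<Union>C" "finite F"
      then obtain B where "B \<in> C" "F \<subseteq> B"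
        using finite_subset_Union_chain[OF F(2) F(1) C] by blast
      then show "satisfiable F"
        using C(2) F(2) unfolding subset_chain_def finitely_satisfiable_def by blast
    qed
    moreover have "T \<subseteq> \<Union>C" using C unfolding subset_chain_def by blast
    ultimately show "\<Union>C \<in> ?A" by blast
  qed
  then obtain M where "T \<subseteq> M" "maximal_finitely_satisfiable M"
    unfolding maximal_finitely_satisfiable_def by (metis (no_types, lifting) mem_Collect_eq order_trans)
  then show ?thesis
    using maximal_finitely_satisfiable_bsat_iff unfolding satisfiable_def by blast
qed

fun bconj :: "'p bform list \<Rightarrow> 'p bform" where
  "bconj [] = BTop"
| "bconj (f # fs) = BAnd f (bconj fs)"

lemma bsat_bconj: "bsat w (bconj fs) \<longleftrightarrow> (\<forall>f\<in>set fs. bsat w f)"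
  by (induction fs) auto

lemma model_of_set_theory_fmls_iff:
  "model_of_set W R (theory_fmls S E X) \<longleftrightarrow>
     W \<subseteq> val S \<and>
     (\<forall>(a, \<phi>, \<psi>)\<in>E. \<forall>w\<in>W. bsat w \<phi> \<longrightarrow> (\<forall>w'. (w, w') \<in> R a \<longrightarrow> bsat w' \<psi>)) \<and>
     (\<forall>(a, \<chi>)\<in>X. \<forall>w\<in>W. bsat w \<chi> \<longrightarrow> (\<exists>w'. (w, w') \<in> R a))"
  unfolding model_of_set_def theory_fmls_def model_of_def
  by (auto simp: ball_Un Ball_image_comp val_def effect_fml_def exec_fml_def Dia_def)

lemma pdl_model_big: "pdl_model (big_W S) (big_R S E)"
  unfolding pdl_model_def big_R_def big_W_def by auto

lemma model_of_big_iff_executable: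
  "model_of_set (big_W S) (big_R S E) (theory_fmls S E X) \<longleftrightarrow>
     (\<forall>a \<chi> w. (a, \<chi>) \<in> X \<longrightarrow> w \<in> val S \<longrightarrow> bsat w \<chi> \<longrightarrow> (\<exists>w'. (w, w') \<in> big_R S E a))"
  unfolding model_of_set_theory_fmls_iff big_W_def by (auto simp: big_R_def)

definition triggered_effects ::
  "('a \<times> 'p bform \<times> 'p bform) set \<Rightarrow> 'a \<Rightarrow> ('p bform \<Rightarrow> bool) \<Rightarrow> 'p bform set" where
  "triggered_effects E a trig = {\<psi>. \<exists>\<phi>. (a, \<phi>, \<psi>) \<in> E \<and> trig \<phi>}"

lemma big_R_iff:
  "(w, w') \<in> big_R S E a \<longleftrightarrow>
     w \<in> val S \<and> (\<forall>f\<in>S \<union> triggered_effects E a (bsat w). bsat w' f)"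
  unfolding big_R_def triggered_effects_def val_def by auto

lemma big_R_successor_iff_satisfiable:
  assumes "w \<in> val S"
  shows "(\<exists>w'. (w, w') \<in> big_R S E a) \<longleftrightarrow> satisfiable (S \<union> triggered_effects E a (bsat w))"
  using assms unfolding big_R_iff satisfiable_def by blast

lemma executable_successor_satisfies_effects:
  assumes "pdl_model W R" "model_of_set W R (theory_fmls S E X)"
    and "v \<in> W" "(a, \<chi>) \<in> X" "bsat v \<chi>"
  obtains v' where "(v, v') \<in> R a" "\<forall>f\<in>S \<union> triggered_effects E a (bsat v). bsat v' f"
proof -
  obtain v' where v': "(v, v') \<in> R a"
    using assms(2-5) unfolding model_of_set_theory_fmls_iff by blast
  then have "v' \<in> val S"
    using assms(1,2) unfolding pdl_model_def model_of_set_theory_fmls_iff by blast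
  moreover have "\<forall>\<psi>\<in>triggered_effects E a (bsat v). bsat v' \<psi>"
    using assms(2,3) v' unfolding model_of_set_theory_fmls_iff triggered_effects_def by fast
  ultimately show ?thesis using that v' unfolding val_def by blast
qed

lemma unsatisfiable_finitely_many_triggers:
  assumes "\<not> satisfiable (S \<union> triggered_effects E a trig)"
  obtains P where "finite P" "\<forall>\<phi>\<in>P. trig \<phi>"
    "\<not> satisfiable (S \<union> triggered_effects E a (\<lambda>\<phi>. \<phi> \<in> P))"
proof -
  obtain F where F: "F \<subseteq> S \<union> triggered_effects E a trig" "finite F" "\<not> satisfiable F"
    using assms compactness unfolding finitely_satisfiable_def by blast
  let ?Q = "{(\<phi>, \<psi>). (a, \<phi>, \<psi>) \<in> E \<and> trig \<phi>}"
  have "F - S \<subseteq> snd ` ?Q" "finite (F - S)"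
    using F(1,2) unfolding triggered_effects_def by force+
  then obtain Q where Q: "Q \<subseteq> ?Q" "finite Q" "F - S = snd ` Q"
    by (meson finite_subset_image)
  have "F \<subseteq> S \<union> triggered_effects E a (\<lambda>\<phi>. \<phi> \<in> fst ` Q)"
    using Q unfolding triggered_effects_def by force
  then have "\<not> satisfiable (S \<union> triggered_effects E a (\<lambda>\<phi>. \<phi> \<in> fst ` Q))"
    using F(3) unfolding satisfiable_def by blast
  moreover have "\<forall>\<phi>\<in>fst ` Q. trig \<phi>" using Q(1) by auto
  ultimately show ?thesis using that Q(2) by blast
qed

lemma pdl_conseq_triggers_exclude_executability:
  assumes law: "(a, \<chi>) \<in> X"
    and conflict: "\<not> satisfiable (S \<union> triggered_effects E a (\<lambda>\<phi>. \<phi> \<in> set ps))"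
  shows "pdl_conseq (theory_fmls S E X) (MB (BNeg (BAnd \<chi> (bconj ps))))"
  unfolding pdl_conseq_def model_of_def
proof (intro allI impI ballI)
  fix W R v assume model: "pdl_model W R" "model_of_set W R (theory_fmls S E X)" and "v \<in> W"
  show "msat R v (MB (BNeg (BAnd \<chi> (bconj ps))))"
  proof (rule ccontr)
    assume "\<not> msat R v (MB (BNeg (BAnd \<chi> (bconj ps))))"
    then have "bsat v \<chi>" and triggers: "\<forall>\<phi>\<in>set ps. bsat v \<phi>"
      by (auto simp: bsat_bconj)
    then obtain v' where "\<forall>f\<in>S \<union> triggered_effects E a (bsat v). bsat v' f"
      using executable_successor_satisfies_effects[OF model \<open>v \<in> W\<close> law] by blast
    moreover have "triggered_effects E a (\<lambda>\<phi>. \<phi> \<in> set ps) \<subseteq> triggered_effects E a (bsat v)"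
      using triggers unfolding triggered_effects_def by blast
    ultimately show False using conflict unfolding satisfiable_def by blast
  qed
qed

lemma modular_big_executable:
  assumes modular: "modular S E X" and w: "w \<in> val S" and law: "(a, \<chi>) \<in> X" "bsat w \<chi>"
  shows "\<exists>w'. (w, w') \<in> big_R S E a"
proof (rule ccontr)
  assume "\<nexists>w'. (w, w') \<in> big_R S E a"
  then have "\<not> satisfiable (S \<union> triggered_effects E a (bsat w))"
    by (simp add: big_R_successor_iff_satisfiable[OF w])
  then obtain P where P: "finite P" "\<forall>\<phi>\<in>P. bsat w \<phi>"
    "\<not> satisfiable (S \<union> triggered_effects E a (\<lambda>\<phi>. \<phi> \<in> P))"
    by (rule unsatisfiable_finitely_many_triggers)
  obtain ps where ps: "set ps = P" using finite_list[OF P(1)] by blast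
  have "cpl_conseq S (BNeg (BAnd \<chi> (bconj ps)))"
    using pdl_conseq_triggers_exclude_executability[OF law(1)] P(3) ps modular
    unfolding modular_def by blast
  moreover have "bsat w (BAnd \<chi> (bconj ps))" using law(2) P(2) by (simp add: bsat_bconj ps)
  ultimately show False using w unfolding cpl_conseq_def by auto
qed

lemma big_model_modular:
  assumes "model_of_set (big_W S) (big_R S E) (theory_fmls S E X)"
  shows "modular S E X"
  unfolding modular_def
proof (intro allI impI)
  fix \<phi> assume "pdl_conseq (theory_fmls S E X) (MB \<phi>)"
  then have "model_of (big_W S) (big_R S E) (MB \<phi>)"
    using pdl_model_big assms unfolding pdl_conseq_def by blast
  then show "cpl_conseq S \<phi>"
    unfolding model_of_def cpl_conseq_def big_W_def by simp
qed

theorem theorem3: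
  fixes S :: "'p bform set"
    and E :: "('a \<times> 'p bform \<times> 'p bform) set"
    and X :: "('a \<times> 'p bform) set"
  shows "modular S E X \<longleftrightarrow> model_of_set (big_W S) (big_R S E) (theory_fmls S E X)"
proof
  assume "modular S E X"
  then show "model_of_set (big_W S) (big_R S E) (theory_fmls S E X)"
    unfolding model_of_big_iff_executable by (blast intro: modular_big_executable)
qed (rule big_model_modular)

end
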